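(* Consider a collaborative learning problem with $k$ agents, strategy space $\Theta\subseteq\mathbb{R}_+^k$, utility functions $u_i:\Theta\to\mathbb{R}$ and thresholds $\mu_i$. For each $i$ let $\vartheta_i\ge0$ be such that $u_i(\vartheta_i,\mathbf{0}_{-i})\ge\mu_i$. If the utilities $\{u_i\}$ are well-behaved over $\prod_{i=1}^k[0,\vartheta_i]\subseteq\Theta$, then a stable equilibrium exists.
   Context: Standing assumptions: each $u_i$ is non-decreasing in every coordinate. $(x,{\boldsymbol\theta}_{-i})$ denotes ${\boldsymbol\theta}$ with $i$-th entry replaced by $x$. ${\boldsymbol\theta}$ is feasible if $u_i({\boldsymbol\theta})\ge\mu_i$ for all $i$. A feasible ${\boldsymbol\theta}$ is a stable equilibrium over $\Theta$ if for no $i$ is there $(\theta_i',{\boldsymbol\theta}_{-i})\in\Theta$ with $\theta_i'<\theta_i$ and $u_i(\theta_i',{\boldsymbol\theta}_{-i})\ge\mu_i$. Utilities are well-behaved over $\prod_{i=1}^k[0,C_i]\subseteq\Theta$ if for each agent $i$ there are constants $c_1^i\ge0$, $c_2^i>0$ such that for all ${\boldsymbol\theta}$ in this box: $\partial u_i({\boldsymbol\theta})/\partial\theta_i\ge c_2^i$, and for all $j\ne i$, $0\le\partial u_i({\boldsymbol\theta})/\partial\theta_j\le c_1^i$. *)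

theory Defs
  imports "HOL-Analysis.Analysis"
begin

text \<open>Agents are indexed by a finite type 'n (k = CARD('n)); a strategy profile is a
  function 'n \<Rightarrow> real. \<open>\<theta>(i := x)\<close> is \<open>(x, \<theta>_{-i})\<close>.\<close>

definition feasible :: "('n \<Rightarrow> ('n \<Rightarrow> real) \<Rightarrow> real) \<Rightarrow> ('n \<Rightarrow> real) \<Rightarrow> ('n \<Rightarrow> real) \<Rightarrow> bool" where
  "feasible u \<mu> \<theta> \<longleftrightarrow> (\<forall>i. u i \<theta> \<ge> \<mu> i)"

definition stable_equilibrium ::
  "('n \<Rightarrow> real) set \<Rightarrow> ('n \<Rightarrow> ('n \<Rightarrow> real) \<Rightarrow> real) \<Rightarrow> ('n \<Rightarrow> real) \<Rightarrow> ('n \<Rightarrow> real) \<Rightarrow> bool" where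
  "stable_equilibrium \<Theta> u \<mu> \<theta> \<longleftrightarrow> feasible u \<mu> \<theta> \<and>
     \<not> (\<exists>i x. \<theta>(i := x) \<in> \<Theta> \<and> x < \<theta> i \<and> u i (\<theta>(i := x)) \<ge> \<mu> i)"

definition box_set :: "('n \<Rightarrow> real) \<Rightarrow> ('n \<Rightarrow> real) set" where
  "box_set C = {\<theta>. \<forall>j. 0 \<le> \<theta> j \<and> \<theta> j \<le> C j}"

text \<open>Partial derivative of \<open>f\<close> in coordinate \<open>j\<close> at \<open>\<theta>\<close>, taken within the box
  (one-sided at the faces of the box).\<close>
definition has_partial_within ::
  "(('n \<Rightarrow> real) \<Rightarrow> real) \<Rightarrow> 'n \<Rightarrow> ('n \<Rightarrow> real) \<Rightarrow> real \<Rightarrow> ('n \<Rightarrow> real) \<Rightarrow> bool" where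
  "has_partial_within f j \<theta> D C \<longleftrightarrow>
     ((\<lambda>t. f (\<theta>(j := t))) has_real_derivative D) (at (\<theta> j) within {0..C j})"

definition well_behaved :: "('n \<Rightarrow> ('n \<Rightarrow> real) \<Rightarrow> real) \<Rightarrow> ('n \<Rightarrow> real) \<Rightarrow> bool" where
  "well_behaved u C \<longleftrightarrow> (\<forall>i. \<exists>c1 c2. c1 \<ge> 0 \<and> c2 > 0 \<and>
     (\<forall>\<theta>\<in>box_set C.
        (\<exists>D. has_partial_within (u i) i \<theta> D C \<and> D \<ge> c2) \<and>
        (\<forall>j. j \<noteq> i \<longrightarrow> (\<exists>D. has_partial_within (u i) j \<theta> D C \<and> 0 \<le> D \<and> D \<le> c1))))"

end

theory Submission
  imports Defs
begin

text \<open>Let the best response \<open>b\<^sub>i(\<theta>)\<close> be the least \<open>x \<in> [0, C\<^sub>i]\<close> with \<open>u\<^sub>i(x, \<theta>\<^sub>-\<^sub>i) \<ge> \<mu>\<^sub>i\<close>;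
  it exists because \<open>u\<^sub>i\<close> is continuous in its own coordinate and \<open>u\<^sub>i(C\<^sub>i, \<theta>\<^sub>-\<^sub>i) \<ge> u\<^sub>i(C\<^sub>i, \<zero>\<^sub>-\<^sub>i) \<ge> \<mu>\<^sub>i\<close>.
  Changing \<open>\<theta>\<^sub>-\<^sub>i\<close> by \<open>\<delta>\<close> in \<open>\<ell>\<^sub>1\<close> changes \<open>u\<^sub>i\<close> by at most \<open>c\<^sub>1\<delta>\<close>, which agent \<open>i\<close> compensates
  by raising its own coordinate by \<open>c\<^sub>1\<delta>/c\<^sub>2\<close>; hence \<open>b\<^sub>i\<close> is Lipschitz. Brouwer's theorem gives
  a fixed point of \<open>b\<close> in the box, and a fixed point is a stable equilibrium because every
  agent already contributes the least amount that keeps it feasible.\<close>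

lemma nondecreasing_if_deriv_within_nonneg:
  fixes F :: "real \<Rightarrow> real"
  assumes deriv: "\<And>t. t \<in> {a..b} \<Longrightarrow> \<exists>D. (F has_real_derivative D) (at t within {a..b}) \<and> 0 \<le> D"
    and "a \<le> x" "x \<le> y" "y \<le> b"
  shows "F x \<le> F y"
proof -
  have "continuous_on {a..b} F"
    unfolding continuous_on_eq_continuous_within using deriv DERIV_continuous by blast
  then have cont: "continuous_on {x..y} F"
    by (rule continuous_on_subset) (use assms in auto)
  show ?thesis
  proof (rule DERIV_nonneg_imp_increasing_open[OF \<open>x \<le> y\<close> _ cont])
    fix t assume "x < t" "t < y"
    then have "a < t" "t < b" using assms by auto
    then have "at t within {a..b} = at t" by (rule at_within_Icc_at)
    moreover obtain D where "(F has_real_derivative D) (at t within {a..b})" "0 \<le> D"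
      using deriv[of t] \<open>a < t\<close> \<open>t < b\<close> by auto
    ultimately show "\<exists>D. DERIV F t :> D \<and> 0 \<le> D" by auto
  qed
qed

lemma growth_if_deriv_within_ge:
  fixes F :: "real \<Rightarrow> real"
  assumes deriv: "\<And>t. t \<in> {a..b} \<Longrightarrow> \<exists>D. (F has_real_derivative D) (at t within {a..b}) \<and> c \<le> D"
    and "a \<le> x" "x \<le> y" "y \<le> b"
  shows "F x + c * (y - x) \<le> F y"
proof -
  have "(\<lambda>s. F s - c * s) x \<le> (\<lambda>s. F s - c * s) y"
  proof (rule nondecreasing_if_deriv_within_nonneg[OF _ assms(2-)])
    fix t assume "t \<in> {a..b}"
    then obtain D where "(F has_real_derivative D) (at t within {a..b})" "c \<le> D"
      using deriv by blast
    then show "\<exists>D. ((\<lambda>s. F s - c * s) has_real_derivative D) (at t within {a..b}) \<and> 0 \<le> D"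
      by (intro exI[of _ "D - c"]) (auto intro!: derivative_eq_intros)
  qed
  then show ?thesis by (simp add: algebra_simps)
qed

lemma growth_if_deriv_within_bounded:
  fixes F :: "real \<Rightarrow> real"
  assumes deriv: "\<And>t. t \<in> {a..b} \<Longrightarrow>
      \<exists>D. (F has_real_derivative D) (at t within {a..b}) \<and> 0 \<le> D \<and> D \<le> c"
    and x: "x \<in> {a..b}" and y: "y \<in> {a..b}"
  shows "F y \<le> F x + c * \<bar>y - x\<bar>"
proof (cases "x \<le> y")
  case True
  have "(\<lambda>s. c * s - F s) x \<le> (\<lambda>s. c * s - F s) y"
  proof (rule nondecreasing_if_deriv_within_nonneg[of a b "\<lambda>s. c * s - F s"])
    fix t assume "t \<in> {a..b}"
    then obtain D where "(F has_real_derivative D) (at t within {a..b})" "D \<le> c"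
      using deriv by blast
    then show "\<exists>D. ((\<lambda>s. c * s - F s) has_real_derivative D) (at t within {a..b}) \<and> 0 \<le> D"
      by (intro exI[of _ "c - D"]) (auto intro!: derivative_eq_intros)
  qed (use x y True in auto)
  then show ?thesis using True by (simp add: algebra_simps)
next
  case False
  have "F y \<le> F x"
    by (rule nondecreasing_if_deriv_within_nonneg[of a b]) (use deriv x y False in auto)
  moreover have "0 \<le> c" using deriv[OF y] by auto
  ultimately show ?thesis by (simp add: add_increasing2)
qed

lemma Inf_superlevel_set_Icc:
  fixes f :: "real \<Rightarrow> real"
  assumes cont: "continuous_on {a..b} f" and "a \<le> b" and "\<mu> \<le> f b"
  defines "m \<equiv> Inf {x\<in>{a..b}. \<mu> \<le> f x}"
  shows "m \<in> {a..b}" "\<mu> \<le> f m" "\<And>x. x \<in> {a..b} \<Longrightarrow> \<mu> \<le> f x \<Longrightarrow> m \<le> x"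
proof -
  let ?S = "{x\<in>{a..b}. \<mu> \<le> f x}"
  have "?S = {a..b} \<inter> f -` {\<mu>..}" by auto
  then have "closed ?S"
    using continuous_closed_preimage[OF cont] by auto
  moreover have "?S \<noteq> {}" using assms by auto
  moreover have bdd: "bdd_below ?S" by (rule bdd_belowI[of _ a]) auto
  ultimately have "m \<in> ?S" unfolding m_def by (intro closed_contains_Inf)
  then show "m \<in> {a..b}" "\<mu> \<le> f m" by auto
  show "\<And>x. x \<in> {a..b} \<Longrightarrow> \<mu> \<le> f x \<Longrightarrow> m \<le> x"
    unfolding m_def by (rule cInf_lower) (use bdd in auto)
qed

lemma mem_box_set: "\<theta> \<in> box_set C \<longleftrightarrow> (\<forall>j. 0 \<le> \<theta> j \<and> \<theta> j \<le> C j)"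
  unfolding box_set_def by simp

lemma fun_upd_in_box_set:
  "\<theta> \<in> box_set C \<Longrightarrow> 0 \<le> x \<Longrightarrow> x \<le> C j \<Longrightarrow> \<theta>(j := x) \<in> box_set C"
  unfolding box_set_def by auto

lemma has_partial_within_fun_upd:
  "has_partial_within f j (\<theta>(j := t)) D C \<longleftrightarrow>
     ((\<lambda>s. f (\<theta>(j := s))) has_real_derivative D) (at t within {0..C j})"
  unfolding has_partial_within_def by simp

text \<open>The constants \<open>c\<^sub>1, c\<^sub>2\<close> of well-behavedness become parameters, and the assumption
  \<open>u\<^sub>i(C\<^sub>i, \<zero>\<^sub>-\<^sub>i) \<ge> \<mu>\<^sub>i\<close> enters only through its monotone consequence
  \<open>threshold_reachable\<close>.\<close>

locale well_behaved_utilities =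
  fixes u :: "'n::finite \<Rightarrow> ('n \<Rightarrow> real) \<Rightarrow> real"
    and \<mu> :: "'n \<Rightarrow> real"
    and C c1 c2 :: "'n \<Rightarrow> real"
  assumes C_nonneg: "0 \<le> C i"
    and c1_nonneg: "0 \<le> c1 i"
    and c2_pos: "0 < c2 i"
    and own_partial: "\<theta> \<in> box_set C \<Longrightarrow> \<exists>D. has_partial_within (u i) i \<theta> D C \<and> c2 i \<le> D"
    and cross_partial: "\<theta> \<in> box_set C \<Longrightarrow> j \<noteq> i \<Longrightarrow>
      \<exists>D. has_partial_within (u i) j \<theta> D C \<and> 0 \<le> D \<and> D \<le> c1 i"
    and threshold_reachable: "\<theta> \<in> box_set C \<Longrightarrow> \<mu> i \<le> u i (\<theta>(i := C i))"
begin

lemma own_growth: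
  assumes "\<theta> \<in> box_set C" and "0 \<le> x" "x \<le> y" "y \<le> C i"
  shows "u i (\<theta>(i := x)) + c2 i * (y - x) \<le> u i (\<theta>(i := y))"
proof (rule growth_if_deriv_within_ge[OF _ assms(2-)])
  fix t assume "t \<in> {0..C i}"
  then have "\<theta>(i := t) \<in> box_set C" using assms(1) by (auto intro: fun_upd_in_box_set)
  then show "\<exists>D. ((\<lambda>s. u i (\<theta>(i := s))) has_real_derivative D) (at t within {0..C i}) \<and> c2 i \<le> D"
    using own_partial[of "\<theta>(i := t)" i] by (simp add: has_partial_within_fun_upd)
qed

lemma cross_growth:
  assumes "\<theta> \<in> box_set C" and "j \<noteq> i" and "x \<in> {0..C j}" "y \<in> {0..C j}"
  shows "u i (\<theta>(j := y)) \<le> u i (\<theta>(j := x)) + c1 i * \<bar>y - x\<bar>"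
proof (rule growth_if_deriv_within_bounded[OF _ assms(3,4)])
  fix t assume "t \<in> {0..C j}"
  then have "\<theta>(j := t) \<in> box_set C" using assms(1) by (auto intro: fun_upd_in_box_set)
  then show "\<exists>D. ((\<lambda>s. u i (\<theta>(j := s))) has_real_derivative D) (at t within {0..C j}) \<and>
      0 \<le> D \<and> D \<le> c1 i"
    using cross_partial[of "\<theta>(j := t)" j i] \<open>j \<noteq> i\<close> by (simp add: has_partial_within_fun_upd)
qed

lemma cross_growth_sum:
  assumes \<theta>: "\<theta> \<in> box_set C" and "\<eta> \<in> box_set C" "i \<notin> J" "\<forall>j. j \<notin> J \<longrightarrow> \<eta> j = \<theta> j"
  shows "u i \<eta> \<le> u i \<theta> + c1 i * (\<Sum>j\<in>J. \<bar>\<eta> j - \<theta> j\<bar>)"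
  using finite[of J] assms(2-)
proof (induction J arbitrary: \<eta> rule: finite_induct)
  case empty
  then have "\<eta> = \<theta>" by auto
  then show ?case by simp
next
  case (insert j J)
  define \<eta>' where "\<eta>' = \<eta>(j := \<theta> j)"
  have \<eta>_j: "\<eta> j \<in> {0..C j}" and \<theta>_j: "\<theta> j \<in> {0..C j}"
    using insert.prems(1) \<theta> by (auto simp: mem_box_set)
  have \<eta>'_box: "\<eta>' \<in> box_set C"
    unfolding \<eta>'_def using insert.prems(1) \<theta>_j by (simp add: fun_upd_in_box_set)
  have "u i \<eta> = u i (\<eta>'(j := \<eta> j))" by (simp add: \<eta>'_def)
  also have "\<dots> \<le> u i (\<eta>'(j := \<theta> j)) + c1 i * \<bar>\<eta> j - \<theta> j\<bar>"
    using insert.prems(2) by (intro cross_growth[OF \<eta>'_box _ \<theta>_j \<eta>_j]) auto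
  also have "\<eta>'(j := \<theta> j) = \<eta>'" by (simp add: \<eta>'_def)
  also have "u i \<eta>' \<le> u i \<theta> + c1 i * (\<Sum>k\<in>J. \<bar>\<eta>' k - \<theta> k\<bar>)"
    by (rule insert.IH[OF \<eta>'_box]) (use insert.prems in \<open>auto simp: \<eta>'_def\<close>)
  also have "(\<Sum>k\<in>J. \<bar>\<eta>' k - \<theta> k\<bar>) = (\<Sum>k\<in>J. \<bar>\<eta> k - \<theta> k\<bar>)"
    by (rule sum.cong) (use insert.hyps in \<open>auto simp: \<eta>'_def\<close>)
  finally show ?case using insert.hyps by (simp add: algebra_simps)
qed

definition best_response :: "'n \<Rightarrow> ('n \<Rightarrow> real) \<Rightarrow> real" where
  "best_response i \<theta> = Inf {x\<in>{0..C i}. \<mu> i \<le> u i (\<theta>(i := x))}"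

lemma continuous_on_own_coordinate:
  assumes "\<theta> \<in> box_set C"
  shows "continuous_on {0..C i} (\<lambda>x. u i (\<theta>(i := x)))"
  unfolding continuous_on_eq_continuous_within
proof
  fix t assume "t \<in> {0..C i}"
  then have "\<theta>(i := t) \<in> box_set C" using assms by (auto intro: fun_upd_in_box_set)
  then obtain D where "has_partial_within (u i) i (\<theta>(i := t)) D C"
    using own_partial by blast
  then have "((\<lambda>x. u i (\<theta>(i := x))) has_real_derivative D) (at t within {0..C i})"
    by (simp only: has_partial_within_fun_upd)
  then show "continuous (at t within {0..C i}) (\<lambda>x. u i (\<theta>(i := x)))"
    by (rule DERIV_continuous)
qed

lemma best_response:
  assumes "\<theta> \<in> box_set C"
  shows best_response_mem: "best_response i \<theta> \<in> {0..C i}"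
    and best_response_feasible: "\<mu> i \<le> u i (\<theta>(i := best_response i \<theta>))"
    and best_response_least: "\<And>x. x \<in> {0..C i} \<Longrightarrow> \<mu> i \<le> u i (\<theta>(i := x)) \<Longrightarrow> best_response i \<theta> \<le> x"
  unfolding best_response_def
  by (fact Inf_superlevel_set_Icc[OF continuous_on_own_coordinate[OF assms] C_nonneg
      threshold_reachable[OF assms]])+

lemma best_response_le:
  assumes \<theta>: "\<theta> \<in> box_set C" and \<theta>': "\<theta>' \<in> box_set C"
  shows "best_response i \<theta>' \<le> best_response i \<theta> + c1 i / c2 i * (\<Sum>j\<in>-{i}. \<bar>\<theta>' j - \<theta> j\<bar>)"
proof -
  define b where "b = best_response i \<theta>"
  define \<delta> where "\<delta> = (\<Sum>j\<in>-{i}. \<bar>\<theta>' j - \<theta> j\<bar>)"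
  define t where "t = b + c1 i / c2 i * \<delta>"
  have b: "0 \<le> b" "b \<le> C i" using best_response_mem[OF \<theta>] unfolding b_def by auto
  have "0 \<le> \<delta>" unfolding \<delta>_def by (rule sum_nonneg) auto
  then have "b \<le> t" unfolding t_def using c1_nonneg[of i] c2_pos[of i] by simp
  show ?thesis
  proof (cases "C i \<le> t")
    case True
    then show ?thesis using best_response_mem[OF \<theta>', of i] unfolding t_def b_def \<delta>_def by auto
  next
    case False
    with b \<open>b \<le> t\<close> have t: "t \<in> {0..C i}" by auto
    have "\<mu> i + c1 i * \<delta> \<le> u i (\<theta>(i := b)) + c2 i * (t - b)"
      using best_response_feasible[OF \<theta>, of i] c2_pos[of i] unfolding b_def t_def by simp
    also have "\<dots> \<le> u i (\<theta>(i := t))"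
      by (rule own_growth[OF \<theta>]) (use b \<open>b \<le> t\<close> t in auto)
    also have "\<dots> \<le> u i (\<theta>'(i := t)) + c1 i * \<delta>"
      using cross_growth_sum[of "\<theta>'(i := t)" "\<theta>(i := t)" i "-{i}"] \<theta> \<theta>' t
      unfolding \<delta>_def by (simp add: fun_upd_in_box_set abs_minus_commute)
    finally have "\<mu> i \<le> u i (\<theta>'(i := t))" by simp
    with t have "best_response i \<theta>' \<le> t" by (rule best_response_least[OF \<theta>'])
    then show ?thesis unfolding t_def b_def \<delta>_def .
  qed
qed

lemma best_response_dist:
  assumes "\<theta> \<in> box_set C" "\<theta>' \<in> box_set C"
  shows "\<bar>best_response i \<theta>' - best_response i \<theta>\<bar> \<le> c1 i / c2 i * (\<Sum>j\<in>UNIV. \<bar>\<theta>' j - \<theta> j\<bar>)"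
proof -
  have "(\<Sum>j\<in>-{i}. \<bar>\<theta>' j - \<theta> j\<bar>) \<le> (\<Sum>j\<in>UNIV. \<bar>\<theta>' j - \<theta> j\<bar>)"
    by (rule sum_mono2) auto
  then have "c1 i / c2 i * (\<Sum>j\<in>-{i}. \<bar>\<theta>' j - \<theta> j\<bar>) \<le> c1 i / c2 i * (\<Sum>j\<in>UNIV. \<bar>\<theta>' j - \<theta> j\<bar>)"
    by (rule mult_left_mono) (use c1_nonneg[of i] c2_pos[of i] in simp)
  then show ?thesis
    using best_response_le[OF assms, of i] best_response_le[OF assms(2,1), of i]
    by (simp add: abs_le_iff abs_minus_commute)
qed

lemma lipschitz_on_best_response:
  "(c1 i / c2 i * CARD('n))-lipschitz_on {v. vec_nth v \<in> box_set C} (\<lambda>v. best_response i (vec_nth v))"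
proof (rule lipschitz_onI)
  fix v w :: "real^'n" assume "v \<in> {v. vec_nth v \<in> box_set C}" "w \<in> {v. vec_nth v \<in> box_set C}"
  then have "dist (best_response i (vec_nth v)) (best_response i (vec_nth w))
      \<le> c1 i / c2 i * (\<Sum>j\<in>UNIV. dist (v $ j) (w $ j))"
    using best_response_dist[of "vec_nth w" "vec_nth v" i] by (simp add: dist_real_def)
  also have "\<dots> \<le> c1 i / c2 i * (\<Sum>j\<in>(UNIV::'n set). dist v w)"
    using c1_nonneg[of i] c2_pos[of i]
    by (intro mult_left_mono sum_mono dist_vec_nth_le) auto
  finally show "dist (best_response i (vec_nth v)) (best_response i (vec_nth w))
      \<le> c1 i / c2 i * CARD('n) * dist v w"
    by simp
qed (use c1_nonneg[of i] c2_pos[of i] in simp)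

lemma best_response_fixpoint:
  obtains \<theta> where "\<theta> \<in> box_set C" "\<And>i. best_response i \<theta> = \<theta> i"
proof -
  define S where "S = cbox (0::real^'n) (\<chi> i. C i)"
  have S_eq: "S = {v. vec_nth v \<in> box_set C}"
    unfolding S_def by (auto simp: mem_box_cart mem_box_set)
  define g where "g v = (\<chi> i. best_response i (vec_nth v))" for v :: "real^'n"
  have "continuous_on S (\<lambda>v. best_response i (vec_nth v))" for i
    unfolding S_eq using lipschitz_on_best_response by (rule lipschitz_on_continuous_on)
  then have cont: "continuous_on S g"
    unfolding g_def by (rule continuous_on_vec_lambda)
  have maps: "g \<in> S \<rightarrow> S"
  proof
    fix v assume "v \<in> S"
    then have "vec_nth v \<in> box_set C" unfolding S_eq by simp
    then have "best_response i (vec_nth v) \<in> {0..C i}" for i by (rule best_response_mem)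
    then show "g v \<in> S" unfolding S_eq g_def by (simp add: mem_box_set)
  qed
  have "0 \<in> S" unfolding S_def mem_box_cart using C_nonneg by simp
  then have nonempty: "S \<noteq> {}" by blast
  obtain v where "v \<in> S" "g v = v"
    by (rule brouwer[OF _ _ nonempty cont maps]) (simp_all add: S_def)
  then have "vec_nth v \<in> box_set C" "best_response i (vec_nth v) = vec_nth v i" for i
    unfolding S_eq g_def by (auto dest: arg_cong[where f = "\<lambda>w. w $ i"])
  then show thesis by (rule that)
qed

lemma best_response_fixpoint_stable:
  assumes \<Theta>_nonneg: "\<Theta> \<subseteq> {\<theta>. \<forall>i. 0 \<le> \<theta> i}"
    and \<theta>: "\<theta> \<in> box_set C" and fixed: "\<And>i. best_response i \<theta> = \<theta> i"
  shows "stable_equilibrium \<Theta> u \<mu> \<theta>"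
  unfolding stable_equilibrium_def feasible_def
proof (intro conjI notI allI)
  fix i show "\<mu> i \<le> u i \<theta>" using best_response_feasible[OF \<theta>, of i] by (simp add: fixed)
next
  assume "\<exists>i x. \<theta>(i := x) \<in> \<Theta> \<and> x < \<theta> i \<and> \<mu> i \<le> u i (\<theta>(i := x))"
  then obtain i x where x: "\<theta>(i := x) \<in> \<Theta>" "x < \<theta> i" "\<mu> i \<le> u i (\<theta>(i := x))" by blast
  have "0 \<le> x" using \<Theta>_nonneg x(1) by (force dest: spec[of _ i])
  moreover have "x \<le> C i" using x(2) \<theta> by (auto simp: mem_box_set dest: spec[of _ i])
  ultimately have "best_response i \<theta> \<le> x" using best_response_least[OF \<theta>] x(3) by auto
  then show False using x(2) fixed[of i] by simp
qed

end

theorem theorem2: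
  fixes \<Theta> :: "('n::finite \<Rightarrow> real) set"
    and u :: "'n \<Rightarrow> ('n \<Rightarrow> real) \<Rightarrow> real"
    and \<mu> :: "'n \<Rightarrow> real"
    and C :: "'n \<Rightarrow> real"
  assumes nonneg: "\<Theta> \<subseteq> {\<theta>. \<forall>i. 0 \<le> \<theta> i}"
    and mono: "\<And>i \<theta> \<theta>'. \<theta> \<in> \<Theta> \<Longrightarrow> \<theta>' \<in> \<Theta> \<Longrightarrow> (\<forall>j. \<theta> j \<le> \<theta>' j) \<Longrightarrow> u i \<theta> \<le> u i \<theta>'"
    and vt_nonneg: "\<And>i. 0 \<le> C i"
    and vt_ok: "\<And>i. u i ((\<lambda>_. 0)(i := C i)) \<ge> \<mu> i"
    and box_sub: "box_set C \<subseteq> \<Theta>"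
    and wb: "well_behaved u C"
  shows "\<exists>\<theta>\<in>\<Theta>. stable_equilibrium \<Theta> u \<mu> \<theta>"
proof -
  obtain c1 c2 :: "'n \<Rightarrow> real" where c: "\<And>i. 0 \<le> c1 i" "\<And>i. 0 < c2 i"
    and own: "\<And>i \<theta>. \<theta> \<in> box_set C \<Longrightarrow> \<exists>D. has_partial_within (u i) i \<theta> D C \<and> c2 i \<le> D"
    and cross: "\<And>i j \<theta>. \<theta> \<in> box_set C \<Longrightarrow> j \<noteq> i \<Longrightarrow>
      \<exists>D. has_partial_within (u i) j \<theta> D C \<and> 0 \<le> D \<and> D \<le> c1 i"
    using wb unfolding well_behaved_def by metis
  have reachable: "\<mu> i \<le> u i (\<theta>(i := C i))" if "\<theta> \<in> box_set C" for i \<theta>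
  proof -
    have "(\<lambda>_. 0)(i := C i) \<in> \<Theta>" "\<theta>(i := C i) \<in> \<Theta>"
      using that vt_nonneg box_sub by (auto simp: mem_box_set)
    moreover have "\<forall>j. ((\<lambda>_. 0)(i := C i)) j \<le> (\<theta>(i := C i)) j"
      using that by (simp add: mem_box_set)
    ultimately show ?thesis using order_trans[OF vt_ok mono] by blast
  qed
  interpret well_behaved_utilities u \<mu> C c1 c2
    using vt_nonneg c own cross reachable by unfold_locales
  obtain \<theta> where \<theta>: "\<theta> \<in> box_set C" "\<And>i. best_response i \<theta> = \<theta> i"
    by (rule best_response_fixpoint) blast
  then have "stable_equilibrium \<Theta> u \<mu> \<theta>"
    by (rule best_response_fixpoint_stable[OF nonneg])
  with \<theta>(1) box_sub show ?thesis by blast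
qed

end
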